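(* Let $d\ge2$, $n\ge1$, let $H$ be a Hermitian operator on $(\mathbb{C}^d)^{\otimes n}$ and let $O$ be a linear operator with $\|O\|_2=1$. Then $|R_M(H,O)|\le 8d^n\|H\|_\infty\log(e)/e$ (log base 2).
   Context: Let $V=\mathbb{Z}_d\times\mathbb{Z}_d$; for $a=(s,t)\in V$, $P_a=X^sZ^t$ with $X|j\rangle=|j+1\bmod d\rangle$, $Z|j\rangle=e^{2\pi ij/d}|j\rangle$; $P_{\vec a}=\bigotimes_iP_{a_i}$. $\|A\|_2=(d^{-n}\mathrm{Tr}(A^\dagger A))^{1/2}$. For $\|O\|_2=1$, $P_O[\vec a]=d^{-2n}|\mathrm{Tr}(OP_{\vec a})|^2$ and $H[O]=-\sum_{\vec a}P_O[\vec a]\log P_O[\vec a]$. The magic rate is $R_M(H,O)=\frac{d}{dt}H[U_tOU_t^\dagger]\big|_{t=0}$ with $U_t=e^{-itH}$; $\|\cdot\|_\infty$ is the operator norm. *)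

theory Defs
  imports Complex_Main "HOL-Library.FuncSet" "Jordan_Normal_Form.Matrix"
begin

text \<open>Operators on (C^d)^{tensor n} are represented as d^n x d^n complex matrices
  (Jordan_Normal_Form). A basis index j < d^n corresponds to the computational basis
  state |j_0,...,j_{n-1}>, where j_i is the i-th digit of j in base d.\<close>

definition digit :: "nat \<Rightarrow> nat \<Rightarrow> nat \<Rightarrow> nat" where
  "digit d i j = (j div d ^ i) mod d"

definition adj :: "complex mat \<Rightarrow> complex mat" where
  "adj A = mat (dim_col A) (dim_row A) (\<lambda>(i,j). cnj (A $$ (j,i)))"

definition tr :: "complex mat \<Rightarrow> complex" where
  "tr A = (\<Sum>i<dim_row A. A $$ (i,i))"

definition hermitian_mat :: "nat \<Rightarrow> complex mat \<Rightarrow> bool" where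
  "hermitian_mat N A \<longleftrightarrow> A \<in> carrier_mat N N \<and> adj A = A"

definition shiftX :: "nat \<Rightarrow> complex mat" where
  "shiftX d = mat d d (\<lambda>(j,k). if j = (k + 1) mod d then 1 else 0)"

definition clockZ :: "nat \<Rightarrow> complex mat" where
  "clockZ d = mat d d (\<lambda>(j,k). if j = k then exp (2 * pi * \<i> * of_nat j / of_nat d) else 0)"

definition weyl :: "nat \<Rightarrow> nat \<times> nat \<Rightarrow> complex mat" where
  "weyl d a = (shiftX d ^\<^sub>m fst a) * (clockZ d ^\<^sub>m snd a)"

text \<open>Pauli string P_{vec a} = tensor product of P_{a_i}, i < n; its matrix entries
  are the products of the single-qudit entries at the base-d digits.\<close>
definition pauli_string :: "nat \<Rightarrow> nat \<Rightarrow> (nat \<Rightarrow> nat \<times> nat) \<Rightarrow> complex mat" where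
  "pauli_string d n a = mat (d ^ n) (d ^ n)
     (\<lambda>(j,k). \<Prod>i<n. weyl d (a i) $$ (digit d i j, digit d i k))"

definition pauli_indices :: "nat \<Rightarrow> nat \<Rightarrow> (nat \<Rightarrow> nat \<times> nat) set" where
  "pauli_indices d n = PiE {..<n} (\<lambda>_. {..<d} \<times> {..<d})"

definition norm2 :: "nat \<Rightarrow> nat \<Rightarrow> complex mat \<Rightarrow> real" where
  "norm2 d n A = sqrt (Re (tr (adj A * A)) / real d ^ n)"

definition vnorm :: "complex vec \<Rightarrow> real" where
  "vnorm v = sqrt (\<Sum>i<dim_vec v. (cmod (v $ i))\<^sup>2)"

definition opnorm :: "complex mat \<Rightarrow> real" where
  "opnorm A = Sup {vnorm (A *\<^sub>v v) | v. v \<in> carrier_vec (dim_col A) \<and> vnorm v = 1}"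

text \<open>Pauli distribution P_O[a] = d^{-2n} |Tr(O P_a)|^2 and stabilizer entropy
  H[O] = - sum_a P_O[a] log_2 P_O[a] (with 0 log 0 = 0, automatic since ln 0 = 0).\<close>
definition pauli_prob :: "nat \<Rightarrow> nat \<Rightarrow> complex mat \<Rightarrow> (nat \<Rightarrow> nat \<times> nat) \<Rightarrow> real" where
  "pauli_prob d n A a = (cmod (tr (A * pauli_string d n a)))\<^sup>2 / real d ^ (2 * n)"

definition pauli_entropy :: "nat \<Rightarrow> nat \<Rightarrow> complex mat \<Rightarrow> real" where
  "pauli_entropy d n A =
     - (\<Sum>a\<in>pauli_indices d n. pauli_prob d n A a * log 2 (pauli_prob d n A a))"

definition mat_exp :: "complex mat \<Rightarrow> complex mat" where
  "mat_exp A = mat (dim_row A) (dim_col A)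
     (\<lambda>(i,j). \<Sum>k. (A ^\<^sub>m k) $$ (i,j) / of_nat (fact k))"

definition evol :: "complex mat \<Rightarrow> real \<Rightarrow> complex mat" where
  "evol H t = mat_exp ((- \<i> * complex_of_real t) \<cdot>\<^sub>m H)"

end

theory Submission
  imports Defs "HOL-Analysis.Analysis"
begin

text \<open>
  Write c_a(t) = Tr(U_t O U_t^* P_a) / d^n, so that P[a] = |c_a(t)|^2. The entries of U_t O U_t^*
  are power series in t whose derivative at 0 is C = -i[H,O]. Hence every summand
  |c_a|^2 log |c_a|^2 of the entropy is differentiable at 0 with derivative
  2 Re(conj(c_a) c_a') (log |c_a|^2 + 1/ln 2), also where c_a(0) = 0, because
  x |ln x| <= 4 x^(3/4). The Weyl operators form an orthogonal basis, so by Parseval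
  Sum_a conj(c_a) c_a' = Tr(O^* C) / d^n, which is purely imaginary for Hermitian H; thus the
  1/ln 2 terms cancel. Since |c_a| <= 1 and x |ln x| <= 1/e, the rest is at most
  4/(e ln 2) Sum_a |c_a'|. Finally Cauchy-Schwarz and Parseval give
  Sum_a |Tr(C P_a)| <= d^n d^(n/2) ||C||_F <= 2 d^(2n) ||H||, where ||.||_F is the unnormalised
  Frobenius norm (frobenius_sq is its square), using ||H O||_F, ||O H||_F <= ||H|| ||O||_F
  and ||O||_F = d^(n/2).
\<close>

section \<open>Adjoints, traces and the Frobenius norm\<close>

lemma index_mult_mat_sum:
  "A \<in> carrier_mat n m \<Longrightarrow> B \<in> carrier_mat m k \<Longrightarrow> i < n \<Longrightarrow> j < k \<Longrightarrow>
    (A * B) $$ (i,j) = (\<Sum>l<m. A $$ (i,l) * B $$ (l,j))"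
  by (simp add: scalar_prod_def atLeast0LessThan)

lemma index_mult_mat_vec_sum:
  "A \<in> carrier_mat n m \<Longrightarrow> v \<in> carrier_vec m \<Longrightarrow> j < n \<Longrightarrow> (A *\<^sub>v v) $ j = (\<Sum>k<m. A $$ (j,k) * v $ k)"
  by (simp add: scalar_prod_def atLeast0LessThan)

lemma index_adj [simp]: "i < dim_col A \<Longrightarrow> j < dim_row A \<Longrightarrow> adj A $$ (i,j) = cnj (A $$ (j,i))"
  by (simp add: adj_def)

lemma dim_adj [simp]: "dim_row (adj A) = dim_col A" "dim_col (adj A) = dim_row A"
  by (simp_all add: adj_def)

lemma adj_carrier: "A \<in> carrier_mat n m \<Longrightarrow> adj A \<in> carrier_mat m n"
  by (intro carrier_matI) (simp_all add: carrier_matD)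

lemma adj_adj [simp]: "adj (adj A) = A"
  by (intro eq_matI) auto

lemma adj_mult:
  assumes "A \<in> carrier_mat n m" "B \<in> carrier_mat m k"
  shows "adj (A * B) = adj B * adj A"
  using assms
  by (intro eq_matI) (simp_all add: index_mult_mat_sum[OF assms]
      index_mult_mat_sum[OF adj_carrier[OF assms(2)] adj_carrier[OF assms(1)]] mult.commute
      del: index_mult_mat(1))

lemma adj_smult: "adj (c \<cdot>\<^sub>m A) = cnj c \<cdot>\<^sub>m adj A"
  by (intro eq_matI) auto

lemma adj_one [simp]: "adj (1\<^sub>m n) = 1\<^sub>m n"
  by (intro eq_matI) auto

lemma tr_adj: "A \<in> carrier_mat n n \<Longrightarrow> tr (adj A) = cnj (tr A)"
  by (simp add: tr_def)

lemma Im_tr_self_adjoint: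
  assumes "A \<in> carrier_mat n n" "adj A = A"
  shows "Im (tr A) = 0"
proof -
  have "cnj (tr A) = tr A"
    using tr_adj[OF assms(1)] assms(2) by simp
  then show ?thesis
    by (simp add: complex_eq_iff)
qed

lemma tr_mult_eq_sum:
  assumes "A \<in> carrier_mat n m" "B \<in> carrier_mat m n"
  shows "tr (A * B) = (\<Sum>i<n. \<Sum>j<m. A $$ (i,j) * B $$ (j,i))"
  using assms by (simp add: tr_def index_mult_mat_sum del: index_mult_mat(1))

lemma tr_mult_commute:
  assumes "A \<in> carrier_mat n m" "B \<in> carrier_mat m n"
  shows "tr (A * B) = tr (B * A)"
  using assms by (simp add: tr_mult_eq_sum[OF assms] tr_mult_eq_sum[OF assms(2,1)] mult.commute)
    (rule sum.swap)

lemma tr_smult: "A \<in> carrier_mat n n \<Longrightarrow> tr (c \<cdot>\<^sub>m A) = c * tr A"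
  by (simp add: tr_def sum_distrib_left)

lemma tr_minus: "A \<in> carrier_mat n n \<Longrightarrow> B \<in> carrier_mat n n \<Longrightarrow> tr (A - B) = tr A - tr B"
  by (simp add: tr_def sum_subtractf)

lemma tr_smult_minus:
  assumes "A \<in> carrier_mat n n" "B \<in> carrier_mat n n"
  shows "tr (c \<cdot>\<^sub>m (A - B)) = c * (tr A - tr B)"
  unfolding tr_smult[OF minus_carrier_mat[OF assms(2)]] tr_minus[OF assms] ..

lemma tr_adj_mult:
  assumes "A \<in> carrier_mat n m" "B \<in> carrier_mat n m"
  shows "tr (adj A * B) = (\<Sum>i<n. \<Sum>j<m. cnj (A $$ (i,j)) * B $$ (i,j))"
  using assms by (simp add: tr_mult_eq_sum[OF adj_carrier[OF assms(1)] assms(2)]) (rule sum.swap)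

lemma cnj_mult_self: "cnj z * z = of_real ((cmod z)\<^sup>2)"
  by (subst complex_norm_square) (rule mult.commute)

definition frobenius_sq :: "complex mat \<Rightarrow> real" where
  "frobenius_sq A = (\<Sum>i<dim_row A. \<Sum>j<dim_col A. (cmod (A $$ (i,j)))\<^sup>2)"

lemma tr_adj_mult_self: "A \<in> carrier_mat n m \<Longrightarrow> tr (adj A * A) = of_real (frobenius_sq A)"
  by (simp add: tr_adj_mult frobenius_sq_def cnj_mult_self)

lemma frobenius_sq_adj: "frobenius_sq (adj A) = frobenius_sq A"
  unfolding frobenius_sq_def by (simp add: sum.swap[of _ "{..<dim_row A}"])

lemma Im_tr_adj_mult_mult:
  assumes "H \<in> carrier_mat n n" "adj H = H" "C \<in> carrier_mat n m"
  shows "Im (tr (adj C * H * C)) = 0"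
proof (rule Im_tr_self_adjoint)
  have C': "adj C \<in> carrier_mat m n"
    by (rule adj_carrier[OF assms(3)])
  show "adj C * H * C \<in> carrier_mat m m"
    using assms C' by simp
  have "adj (adj C * H * C) = adj C * adj (adj C * H)"
    by (rule adj_mult[OF mult_carrier_mat[OF C' assms(1)] assms(3)])
  also have "\<dots> = adj C * H * C"
    using assms C' by (simp add: adj_mult[OF C' assms(1)])
  finally show "adj (adj C * H * C) = adj C * H * C" .
qed

lemma Re_tr_adj_mult_commutator:
  assumes H: "H \<in> carrier_mat n n" "adj H = H" and B: "B \<in> carrier_mat n n"
  shows "Re (tr (adj B * (- \<i> \<cdot>\<^sub>m (H * B - B * H)))) = 0"
proof -
  have B': "adj B \<in> carrier_mat n n"
    by (rule adj_carrier[OF B])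
  have HB: "H * B \<in> carrier_mat n n" and BH: "B * H \<in> carrier_mat n n"
    using H B by simp_all
  have "tr (adj B * (- \<i> \<cdot>\<^sub>m (H * B - B * H))) = tr (- \<i> \<cdot>\<^sub>m (adj B * (H * B) - adj B * (B * H)))"
    unfolding mult_smult_distrib[OF B' minus_carrier_mat[OF BH]] mult_minus_distrib_mat[OF B' HB BH] ..
  also have "\<dots> = - \<i> * (tr (adj B * H * B) - tr (B * H * adj B))"
    using B B' H HB BH by (simp add: tr_smult_minus[of _ n] tr_mult_commute[OF B' BH])
  finally have "tr (adj B * (- \<i> \<cdot>\<^sub>m (H * B - B * H)))
      = - \<i> * (tr (adj B * H * B) - tr (B * H * adj B))" .
  moreover have "Im (tr (adj B * H * B)) = 0"
    by (rule Im_tr_adj_mult_mult[OF H B])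
  moreover have "Im (tr (B * H * adj B)) = 0"
    using Im_tr_adj_mult_mult[OF H B'] by simp
  ultimately show ?thesis
    by simp
qed

section \<open>The operator norm\<close>

lemma vnorm_eq_L2_set: "vnorm v = L2_set (\<lambda>i. cmod (v $ i)) {..<dim_vec v}"
  by (simp add: vnorm_def L2_set_def)

lemma vnorm_nonneg: "0 \<le> vnorm v"
  by (simp add: vnorm_eq_L2_set)

lemma vnorm_smult: "vnorm (c \<cdot>\<^sub>v v) = cmod c * vnorm v"
proof -
  have "L2_set (\<lambda>i. cmod ((c \<cdot>\<^sub>v v) $ i)) {..<dim_vec v} = L2_set (\<lambda>i. cmod c * cmod (v $ i)) {..<dim_vec v}"
    by (rule L2_set_cong) (auto simp: norm_mult)
  then show ?thesis
    by (simp add: vnorm_eq_L2_set L2_set_right_distrib)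
qed

lemma vnorm_mult_mat_vec_le:
  assumes "A \<in> carrier_mat n m" "v \<in> carrier_vec m"
  shows "vnorm (A *\<^sub>v v) \<le> sqrt (frobenius_sq A) * vnorm v"
proof -
  have row: "(cmod ((A *\<^sub>v v) $ j))\<^sup>2 \<le> (\<Sum>k<m. (cmod (A $$ (j,k)))\<^sup>2) * (vnorm v)\<^sup>2" if "j < n" for j
  proof -
    have "cmod ((A *\<^sub>v v) $ j) \<le> (\<Sum>k<m. \<bar>cmod (A $$ (j,k))\<bar> * \<bar>cmod (v $ k)\<bar>)"
      unfolding index_mult_mat_vec_sum[OF assms that]
      by (auto simp: norm_mult intro!: order.trans[OF norm_sum])
    also have "\<dots> \<le> L2_set (\<lambda>k. cmod (A $$ (j,k))) {..<m} * vnorm v"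
      using assms(2) L2_set_mult_ineq[of "\<lambda>k. cmod (A $$ (j,k))" "\<lambda>k. cmod (v $ k)" "{..<m}"]
      by (simp add: vnorm_eq_L2_set)
    finally have "(cmod ((A *\<^sub>v v) $ j))\<^sup>2 \<le> (L2_set (\<lambda>k. cmod (A $$ (j,k))) {..<m} * vnorm v)\<^sup>2"
      by (rule power_mono) simp
    then show ?thesis
      by (simp add: power_mult_distrib L2_set_def sum_nonneg)
  qed
  have "(vnorm (A *\<^sub>v v))\<^sup>2 = (\<Sum>j<n. (cmod ((A *\<^sub>v v) $ j))\<^sup>2)"
    using assms by (simp add: vnorm_def sum_nonneg)
  also have "\<dots> \<le> (\<Sum>j<n. (\<Sum>k<m. (cmod (A $$ (j,k)))\<^sup>2) * (vnorm v)\<^sup>2)"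
    by (intro sum_mono row) simp
  also have "\<dots> = (sqrt (frobenius_sq A) * vnorm v)\<^sup>2"
    using assms by (simp add: frobenius_sq_def power_mult_distrib sum_distrib_right sum_nonneg)
  finally show ?thesis
    by (rule power2_le_imp_le) (simp add: vnorm_nonneg frobenius_sq_def sum_nonneg)
qed

lemma opnorm_bdd_above: "bdd_above {vnorm (A *\<^sub>v v) |v. v \<in> carrier_vec (dim_col A) \<and> vnorm v = 1}"
proof (rule bdd_aboveI[where M = "sqrt (frobenius_sq A)"])
  fix x
  assume "x \<in> {vnorm (A *\<^sub>v v) |v. v \<in> carrier_vec (dim_col A) \<and> vnorm v = 1}"
  then obtain v where "x = vnorm (A *\<^sub>v v)" "v \<in> carrier_vec (dim_col A)" "vnorm v = 1"
    by blast
  then show "x \<le> sqrt (frobenius_sq A)"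
    using vnorm_mult_mat_vec_le[OF carrier_mat_triv, of v A] by simp
qed

lemma opnorm_le:
  assumes v: "v \<in> carrier_vec (dim_col A)"
  shows "vnorm (A *\<^sub>v v) \<le> opnorm A * vnorm v"
proof (cases "vnorm v = 0")
  case True
  then show ?thesis
    using vnorm_mult_mat_vec_le[OF carrier_mat_triv v] by simp
next
  case False
  define r where "r = vnorm v"
  have r: "r > 0"
    using False vnorm_nonneg[of v] by (simp add: r_def)
  define w where "w = complex_of_real (1 / r) \<cdot>\<^sub>v v"
  have w: "w \<in> carrier_vec (dim_col A)" "vnorm w = 1"
    using v r by (simp_all add: w_def vnorm_smult norm_divide r_def)
  have "vnorm (A *\<^sub>v v) / r = vnorm (A *\<^sub>v w)"
    using v r by (simp add: w_def mult_mat_vec[OF carrier_mat_triv] vnorm_smult norm_divide)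
  also have "\<dots> \<le> opnorm A"
    unfolding opnorm_def using w by (intro cSup_upper opnorm_bdd_above) auto
  finally show ?thesis
    using r by (simp add: r_def divide_le_eq mult.commute)
qed

lemma opnorm_nonneg:
  assumes "dim_col A > 0"
  shows "0 \<le> opnorm A"
proof -
  let ?e = "unit_vec (dim_col A) 0 :: complex Matrix.vec"
  have "(\<Sum>i<dim_col A. (cmod (?e $ i))\<^sup>2) = (\<Sum>i<dim_col A. if i = 0 then 1 else 0)"
    using assms by (intro sum.cong refl) auto
  then have "vnorm ?e = 1"
    using assms by (simp add: vnorm_def)
  then show ?thesis
    using opnorm_le[of ?e A] vnorm_nonneg[of "A *\<^sub>v ?e"] by simp
qed

lemma frobenius_sq_mult_left_le:
  assumes "A \<in> carrier_mat k n" "B \<in> carrier_mat n m"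
  shows "frobenius_sq (A * B) \<le> (opnorm A)\<^sup>2 * frobenius_sq B"
proof -
  have col: "(\<Sum>i<k. (cmod ((A * B) $$ (i,j)))\<^sup>2) \<le> (opnorm A)\<^sup>2 * (\<Sum>i<n. (cmod (B $$ (i,j)))\<^sup>2)"
    if "j < m" for j
  proof -
    have "(\<Sum>i<k. (cmod ((A * B) $$ (i,j)))\<^sup>2) = (vnorm (A *\<^sub>v col B j))\<^sup>2"
      using assms that by (simp add: vnorm_def sum_nonneg)
    also have "\<dots> \<le> (opnorm A * vnorm (col B j))\<^sup>2"
      using assms by (intro power_mono opnorm_le) (auto simp: vnorm_nonneg)
    also have "\<dots> = (opnorm A)\<^sup>2 * (\<Sum>i<n. (cmod (B $$ (i,j)))\<^sup>2)"
      using assms that by (simp add: vnorm_def power_mult_distrib sum_nonneg)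
    finally show ?thesis .
  qed
  have "frobenius_sq (A * B) = (\<Sum>j<m. \<Sum>i<k. (cmod ((A * B) $$ (i,j)))\<^sup>2)"
    using assms by (simp add: frobenius_sq_def sum.swap[of _ "{..<k}"])
  also have "\<dots> \<le> (\<Sum>j<m. (opnorm A)\<^sup>2 * (\<Sum>i<n. (cmod (B $$ (i,j)))\<^sup>2))"
    by (intro sum_mono col) simp
  also have "\<dots> = (opnorm A)\<^sup>2 * frobenius_sq B"
    using assms by (simp add: frobenius_sq_def sum_distrib_left sum.swap[of _ "{..<n}"])
  finally show ?thesis .
qed

lemma frobenius_sq_mult_right_le:
  assumes "A \<in> carrier_mat n m" "B \<in> carrier_mat m k"
  shows "frobenius_sq (A * B) \<le> (opnorm (adj B))\<^sup>2 * frobenius_sq A"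
  using frobenius_sq_mult_left_le[OF adj_carrier[OF assms(2)] adj_carrier[OF assms(1)]]
  by (simp add: adj_mult[OF assms, symmetric] frobenius_sq_adj)

section \<open>Weyl operators and Pauli strings\<close>

lemma sum_mult_indicator:
  "finite S \<Longrightarrow> (\<Sum>l\<in>S. f l * (if l = a then 1 else 0)) = (if a \<in> S then f a else (0::'a::semiring_1))"
  by (simp add: if_distrib[of "\<lambda>x. f _ * x"] cong: if_cong)

lemma shiftX_power_entry:
  assumes "x < d" "y < d"
  shows "(shiftX d ^\<^sub>m s) $$ (x,y) = (if x = (y + s) mod d then 1 else 0)"
  using assms(2)
proof (induct s arbitrary: y)
  case 0
  then show ?case using assms by (simp add: shiftX_def)
next
  case (Suc s)
  have "(shiftX d ^\<^sub>m Suc s) $$ (x,y) = (\<Sum>l<d. (shiftX d ^\<^sub>m s) $$ (x,l) * shiftX d $$ (l,y))"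
    unfolding pow_mat.simps(2) using assms Suc.prems
    by (intro index_mult_mat_sum) (auto simp: shiftX_def)
  also have "\<dots> = (\<Sum>l<d. (if x = (l + s) mod d then 1 else 0) * (if l = (y + 1) mod d then 1 else 0))"
    using Suc by (intro sum.cong refl) (simp add: shiftX_def)
  also have "\<dots> = (if x = ((y + 1) mod d + s) mod d then 1 else 0)"
    using assms by (subst sum_mult_indicator) auto
  finally show ?case
    by (simp add: mod_add_left_eq)
qed

definition clock_phase :: "nat \<Rightarrow> nat \<Rightarrow> complex" where
  "clock_phase d y = exp (2 * pi * \<i> * of_nat y / of_nat d)"

lemma clockZ_power_entry:
  assumes "x < d" "y < d"
  shows "(clockZ d ^\<^sub>m t) $$ (x,y) = (if x = y then clock_phase d y ^ t else 0)"
  using assms(2)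
proof (induct t arbitrary: y)
  case 0
  then show ?case using assms by (simp add: clockZ_def)
next
  case (Suc t)
  have "(clockZ d ^\<^sub>m Suc t) $$ (x,y) = (\<Sum>l<d. (clockZ d ^\<^sub>m t) $$ (x,l) * clockZ d $$ (l,y))"
    unfolding pow_mat.simps(2) using assms Suc.prems
    by (intro index_mult_mat_sum) (auto simp: clockZ_def)
  also have "\<dots> = (\<Sum>l<d. (if x = l then clock_phase d l ^ t else 0) * (clock_phase d y * (if l = y then 1 else 0)))"
    using Suc by (intro sum.cong refl) (simp add: clockZ_def clock_phase_def)
  also have "\<dots> = (if x = y then clock_phase d y ^ Suc t else 0)"
    using assms Suc by (simp add: mult.assoc[symmetric] sum_mult_indicator)
  finally show ?case .
qed

lemma weyl_entry:
  assumes "x < d" "y < d"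
  shows "weyl d (s,t) $$ (x,y) = (if x = (y + s) mod d then clock_phase d y ^ t else 0)"
proof -
  have "weyl d (s,t) $$ (x,y) = (\<Sum>l<d. (shiftX d ^\<^sub>m s) $$ (x,l) * (clockZ d ^\<^sub>m t) $$ (l,y))"
    unfolding weyl_def fst_conv snd_conv using assms
    by (intro index_mult_mat_sum) (auto simp: shiftX_def clockZ_def)
  also have "\<dots> = (\<Sum>l<d. (if x = (l + s) mod d then 1 else 0) * (clock_phase d y ^ t * (if l = y then 1 else 0)))"
    using assms by (intro sum.cong) (auto simp: shiftX_power_entry clockZ_power_entry)
  also have "\<dots> = (if x = (y + s) mod d then clock_phase d y ^ t else 0)"
    using assms by (simp add: mult.assoc[symmetric] sum_mult_indicator)
  finally show ?thesis .
qed

lemma cnj_clock_phase: "cnj (clock_phase d y) = inverse (clock_phase d y)"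
  by (simp add: clock_phase_def exp_cnj exp_minus)

lemma clock_phase_orthogonal:
  assumes "y < d" "y' < d"
  shows "(\<Sum>t<d. cnj (clock_phase d y) ^ t * clock_phase d y' ^ t) = (if y = y' then of_nat d else 0)"
proof -
  define r where "r = clock_phase d y' / clock_phase d y"
  have "(\<Sum>t<d. cnj (clock_phase d y) ^ t * clock_phase d y' ^ t) = (\<Sum>t<d. r ^ t)"
    by (simp add: r_def cnj_clock_phase power_divide power_inverse power_mult_distrib divide_inverse mult.commute)
  also have "\<dots> = (if y = y' then of_nat d else 0)"
  proof (cases "y = y'")
    case True
    then show ?thesis by (simp add: r_def clock_phase_def)
  next
    case False
    have "r \<noteq> 1"
      using False assms complex_root_unity_eq[of d y' y] by (auto simp: r_def clock_phase_def)
    moreover have "r ^ d = 1"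
      using assms complex_root_unity[of d] by (simp add: r_def clock_phase_def power_divide)
    ultimately show ?thesis
      using False by (simp add: sum_gp_strict)
  qed
  finally show ?thesis .
qed

lemma mod_eq_iff_less_double:
  "(a::nat) < 2 * d \<Longrightarrow> b < d \<Longrightarrow> a mod d = b \<longleftrightarrow> a = b \<or> a = b + d"
  by (cases "a < d") (auto simp: le_mod_geq)

lemma mod_add_eq_iff:
  assumes "x < d" "y < d" "(s::nat) < d"
  shows "x = (y + s) mod d \<longleftrightarrow> s = (x + d - y) mod d"
proof -
  have "x = (y + s) mod d \<longleftrightarrow> y + s = x \<or> y + s = x + d"
    using mod_eq_iff_less_double[of "y + s" d x] assms by auto
  also have "\<dots> \<longleftrightarrow> x + d - y = s \<or> x + d - y = s + d"
    using assms by arith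
  also have "\<dots> \<longleftrightarrow> s = (x + d - y) mod d"
    using mod_eq_iff_less_double[of "x + d - y" d s] assms by auto
  finally show ?thesis .
qed

lemma weyl_completeness:
  assumes "x < d" "y < d" "x' < d" "y' < d"
  shows "(\<Sum>st\<in>{..<d} \<times> {..<d}. cnj (weyl d st $$ (x,y)) * weyl d st $$ (x',y'))
     = (if x = x' \<and> y = y' then of_nat d else 0)"
proof -
  have "(\<Sum>st\<in>{..<d} \<times> {..<d}. cnj (weyl d st $$ (x,y)) * weyl d st $$ (x',y'))
      = (\<Sum>s<d. \<Sum>t<d. cnj (weyl d (s,t) $$ (x,y)) * weyl d (s,t) $$ (x',y'))"
    by (simp add: sum.cartesian_product)
  also have "\<dots> = (\<Sum>s<d. if x = (y + s) mod d \<and> x' = (y' + s) mod d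
           then (\<Sum>t<d. cnj (clock_phase d y) ^ t * clock_phase d y' ^ t) else 0)"
    using assms by (intro sum.cong refl) (auto simp: weyl_entry)
  also have "\<dots> = (\<Sum>s<d. if x = (y + s) mod d \<and> x' = (y' + s) mod d \<and> y = y' then of_nat d else 0)"
    using assms by (intro sum.cong refl) (simp add: clock_phase_orthogonal)
  also have "\<dots> = (if x = x' \<and> y = y' then of_nat d else 0)"
  proof (cases "x = x' \<and> y = y'")
    case True
    then have "(\<Sum>s<d. if x = (y + s) mod d \<and> x' = (y' + s) mod d \<and> y = y' then of_nat d else 0)
        = (\<Sum>s<d. if s = (x + d - y) mod d then of_nat d else (0::complex))"
      using assms by (intro sum.cong refl) (simp add: mod_add_eq_iff)
    then show ?thesis
      using True assms by simp
  qed (auto intro!: sum.neutral)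
  finally show ?thesis .
qed

lemma digit_less: "d > 0 \<Longrightarrow> digit d i m < d"
  by (simp add: digit_def)

lemma digit_Suc: "digit d (Suc i) m = digit d i (m div d)"
  by (simp add: digit_def div_mult2_eq mult.commute)

lemma digits_eq_imp_eq:
  assumes "d > 0" "m < d ^ n" "m' < d ^ n" "\<forall>i<n. digit d i m = digit d i m'"
  shows "m = m'"
  using assms(2-4)
proof (induct n arbitrary: m m')
  case (Suc n)
  have "m div d < d ^ n" "m' div d < d ^ n"
    using Suc.prems assms(1) by (auto simp: less_mult_imp_div_less mult.commute)
  moreover have "\<forall>i<n. digit d i (m div d) = digit d i (m' div d)"
    using Suc.prems(3) by (auto simp flip: digit_Suc)
  ultimately have "m div d = m' div d"
    using Suc.hyps by blast
  moreover have "m mod d = m' mod d"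
    using Suc.prems(3) by (metis digit_def div_by_1 power_0 zero_less_Suc)
  ultimately show ?case
    by (metis div_mod_decomp)
qed simp

lemma prod_if_const:
  "finite I \<Longrightarrow> (\<Prod>i\<in>I. if P i then c else 0) = (if \<forall>i\<in>I. P i then c ^ card I else (0::'a::comm_semiring_1))"
  by (induct I rule: finite_induct) auto

lemma pauli_string_carrier [simp]: "pauli_string d n a \<in> carrier_mat (d ^ n) (d ^ n)"
  by (simp add: pauli_string_def)

lemma index_pauli_string:
  "m < d ^ n \<Longrightarrow> j < d ^ n \<Longrightarrow>
    pauli_string d n a $$ (m,j) = (\<Prod>i<n. weyl d (a i) $$ (digit d i m, digit d i j))"
  by (simp add: pauli_string_def)

lemma finite_pauli_indices [simp]: "finite (pauli_indices d n)"
  by (simp add: pauli_indices_def finite_PiE)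

lemma card_pauli_indices: "card (pauli_indices d n) = (d * d) ^ n"
  by (simp add: pauli_indices_def card_PiE)

lemma pauli_string_completeness:
  assumes "d > 0" "m < d ^ n" "j < d ^ n" "m' < d ^ n" "j' < d ^ n"
  shows "(\<Sum>a\<in>pauli_indices d n. cnj (pauli_string d n a $$ (m,j)) * pauli_string d n a $$ (m',j'))
       = (if m = m' \<and> j = j' then of_nat (d ^ n) else 0)"
proof -
  have "(\<Sum>a\<in>pauli_indices d n. cnj (pauli_string d n a $$ (m,j)) * pauli_string d n a $$ (m',j'))
      = (\<Sum>a\<in>pauli_indices d n. \<Prod>i<n. cnj (weyl d (a i) $$ (digit d i m, digit d i j))
                                        * weyl d (a i) $$ (digit d i m', digit d i j'))"
    using assms by (simp add: index_pauli_string prod.distrib)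
  also have "\<dots> = (\<Prod>i<n. \<Sum>st\<in>{..<d} \<times> {..<d}. cnj (weyl d st $$ (digit d i m, digit d i j))
                                              * weyl d st $$ (digit d i m', digit d i j'))"
    unfolding pauli_indices_def by (subst prod_sum_PiE) auto
  also have "\<dots> = (\<Prod>i<n. if digit d i m = digit d i m' \<and> digit d i j = digit d i j' then of_nat d else 0)"
    using assms(1) by (intro prod.cong refl weyl_completeness) (auto simp: digit_less)
  also have "\<dots> = (if \<forall>i\<in>{..<n}. digit d i m = digit d i m' \<and> digit d i j = digit d i j' then of_nat d ^ n else 0)"
    by (simp add: prod_if_const)
  also have "(\<forall>i\<in>{..<n}. digit d i m = digit d i m' \<and> digit d i j = digit d i j') \<longleftrightarrow> m = m' \<and> j = j'"
    using digits_eq_imp_eq[OF assms(1) assms(2,4)] digits_eq_imp_eq[OF assms(1) assms(3,5)] by blast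
  finally show ?thesis
    by simp
qed

lemma tr_mult_pauli_string:
  "A \<in> carrier_mat (d ^ n) (d ^ n) \<Longrightarrow>
    tr (A * pauli_string d n a)
      = (\<Sum>(j,m)\<in>{..<d ^ n} \<times> {..<d ^ n}. A $$ (j,m) * pauli_string d n a $$ (m,j))"
  by (simp add: tr_mult_eq_sum sum.cartesian_product)

lemma pauli_parseval:
  assumes "d > 0" "A \<in> carrier_mat (d ^ n) (d ^ n)" "B \<in> carrier_mat (d ^ n) (d ^ n)"
  shows "(\<Sum>a\<in>pauli_indices d n. cnj (tr (A * pauli_string d n a)) * tr (B * pauli_string d n a))
       = of_nat (d ^ n) * tr (adj A * B)"
proof -
  let ?I = "pauli_indices d n" and ?P = "pauli_string d n" and ?S = "{..<d ^ n} \<times> {..<d ^ n}"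
  define coupling where
    "coupling p q = (\<Sum>a\<in>?I. cnj (?P a $$ (snd p, fst p)) * ?P a $$ (snd q, fst q))" for p q
  have coupling: "coupling p q = (if q = p then of_nat (d ^ n) else 0)" if "p \<in> ?S" "q \<in> ?S" for p q
    using that pauli_string_completeness[OF assms(1)] by (auto simp: coupling_def prod_eq_iff)
  have tr_P: "tr (X * ?P a) = (\<Sum>p\<in>?S. X $$ p * ?P a $$ (snd p, fst p))"
    if "X \<in> carrier_mat (d ^ n) (d ^ n)" for X a
    using that by (simp add: tr_mult_pauli_string case_prod_beta)
  have "(\<Sum>a\<in>?I. cnj (tr (A * ?P a)) * tr (B * ?P a))
      = (\<Sum>a\<in>?I. \<Sum>p\<in>?S. \<Sum>q\<in>?S. cnj (A $$ p) * B $$ q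
            * (cnj (?P a $$ (snd p, fst p)) * ?P a $$ (snd q, fst q)))"
    by (simp only: tr_P assms cnj_sum sum_product complex_cnj_mult) (simp only: mult_ac)
  also have "\<dots> = (\<Sum>p\<in>?S. \<Sum>a\<in>?I. \<Sum>q\<in>?S. cnj (A $$ p) * B $$ q
            * (cnj (?P a $$ (snd p, fst p)) * ?P a $$ (snd q, fst q)))"
    by (rule sum.swap)
  also have "\<dots> = (\<Sum>p\<in>?S. \<Sum>q\<in>?S. \<Sum>a\<in>?I. cnj (A $$ p) * B $$ q
            * (cnj (?P a $$ (snd p, fst p)) * ?P a $$ (snd q, fst q)))"
    by (intro sum.cong refl sum.swap)
  also have "\<dots> = (\<Sum>p\<in>?S. \<Sum>q\<in>?S. cnj (A $$ p) * B $$ q * coupling p q)"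
    by (simp only: coupling_def sum_distrib_left)
  also have "\<dots> = (\<Sum>p\<in>?S. \<Sum>q\<in>?S. if q = p then cnj (A $$ p) * B $$ q * of_nat (d ^ n) else 0)"
    by (intro sum.cong refl) (simp add: coupling)
  also have "\<dots> = (\<Sum>p\<in>?S. of_nat (d ^ n) * (cnj (A $$ p) * B $$ p))"
    by (intro sum.cong refl) (simp add: mult.commute)
  also have "\<dots> = of_nat (d ^ n) * tr (adj A * B)"
    using assms by (simp add: tr_adj_mult sum.cartesian_product case_prod_beta sum_distrib_left)
  finally show ?thesis .
qed

lemma pauli_parseval_norm:
  assumes "d > 0" "A \<in> carrier_mat (d ^ n) (d ^ n)"
  shows "(\<Sum>a\<in>pauli_indices d n. (cmod (tr (A * pauli_string d n a)))\<^sup>2) = real d ^ n * frobenius_sq A"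
proof -
  have "complex_of_real (\<Sum>a\<in>pauli_indices d n. (cmod (tr (A * pauli_string d n a)))\<^sup>2)
      = of_real (real d ^ n * frobenius_sq A)"
    using pauli_parseval[OF assms assms(2)] by (simp add: cnj_mult_self tr_adj_mult_self[OF assms(2)])
  then show ?thesis
    by (simp only: of_real_eq_iff)
qed

lemma pauli_l1_le:
  assumes "d > 0" "A \<in> carrier_mat (d ^ n) (d ^ n)"
  shows "(\<Sum>a\<in>pauli_indices d n. cmod (tr (A * pauli_string d n a)))
       \<le> real d ^ n * sqrt (real d ^ n * frobenius_sq A)"
proof -
  let ?I = "pauli_indices d n" and ?c = "\<lambda>a. cmod (tr (A * pauli_string d n a))"
  have "(\<Sum>a\<in>?I. ?c a) = (\<Sum>a\<in>?I. \<bar>?c a\<bar> * \<bar>1\<bar>)"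
    by simp
  also have "\<dots> \<le> L2_set ?c ?I * L2_set (\<lambda>_. 1) ?I"
    by (rule L2_set_mult_ineq)
  also have "L2_set ?c ?I = sqrt (real d ^ n * frobenius_sq A)"
    by (simp add: L2_set_def pauli_parseval_norm[OF assms])
  also have "L2_set (\<lambda>_. 1::real) ?I = real d ^ n"
  proof -
    have "real (card ?I) = (real d ^ n)\<^sup>2"
      by (simp add: card_pauli_indices power_mult_distrib power2_eq_square)
    then show ?thesis
      by (simp add: L2_set_constant)
  qed
  finally show ?thesis
    by (simp add: mult.commute)
qed

lemma pauli_l1_commutator_le:
  assumes "d > 0" and H: "H \<in> carrier_mat (d ^ n) (d ^ n)" "adj H = H"
    and B: "B \<in> carrier_mat (d ^ n) (d ^ n)"
  shows "(\<Sum>a\<in>pauli_indices d n. cmod (tr ((- \<i> \<cdot>\<^sub>m (H * B - B * H)) * pauli_string d n a)))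
       \<le> 2 * real d ^ n * opnorm H * sqrt (real d ^ n * frobenius_sq B)"
proof -
  let ?I = "pauli_indices d n" and ?P = "pauli_string d n" and ?D = "real d ^ n"
  have HB: "H * B \<in> carrier_mat (d ^ n) (d ^ n)" and BH: "B * H \<in> carrier_mat (d ^ n) (d ^ n)"
    using H B by simp_all
  have H0: "0 \<le> opnorm H"
    using H assms(1) by (intro opnorm_nonneg) simp
  have l1: "(\<Sum>a\<in>?I. cmod (tr (X * ?P a))) \<le> ?D * (opnorm H * sqrt (?D * frobenius_sq B))"
    if "X \<in> carrier_mat (d ^ n) (d ^ n)" "frobenius_sq X \<le> (opnorm H)\<^sup>2 * frobenius_sq B" for X
  proof -
    have "sqrt (?D * frobenius_sq X) \<le> sqrt (?D * ((opnorm H)\<^sup>2 * frobenius_sq B))"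
      using that by (intro real_sqrt_le_mono mult_left_mono) auto
    also have "\<dots> = opnorm H * sqrt (?D * frobenius_sq B)"
      using H0 by (simp add: real_sqrt_mult mult.left_commute)
    finally show ?thesis
      using pauli_l1_le[OF assms(1) that(1)] by (meson mult_left_mono order.trans zero_le_power of_nat_0_le_iff)
  qed
  have "cmod (tr ((- \<i> \<cdot>\<^sub>m (H * B - B * H)) * ?P a)) \<le> cmod (tr (H * B * ?P a)) + cmod (tr (B * H * ?P a))"
    for a
  proof -
    have "tr ((- \<i> \<cdot>\<^sub>m (H * B - B * H)) * ?P a) = - \<i> * (tr (H * B * ?P a) - tr (B * H * ?P a))"
      unfolding mult_smult_assoc_mat[OF minus_carrier_mat[OF BH] pauli_string_carrier]
        minus_mult_distrib_mat[OF HB BH pauli_string_carrier]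
      by (rule tr_smult_minus[OF mult_carrier_mat[OF HB pauli_string_carrier]
            mult_carrier_mat[OF BH pauli_string_carrier]])
    then show ?thesis
      by (simp add: norm_mult norm_triangle_ineq4)
  qed
  then have "(\<Sum>a\<in>?I. cmod (tr ((- \<i> \<cdot>\<^sub>m (H * B - B * H)) * ?P a)))
      \<le> (\<Sum>a\<in>?I. cmod (tr (H * B * ?P a))) + (\<Sum>a\<in>?I. cmod (tr (B * H * ?P a)))"
    by (simp add: sum.distrib[symmetric] sum_mono)
  also have "\<dots> \<le> ?D * (opnorm H * sqrt (?D * frobenius_sq B)) + ?D * (opnorm H * sqrt (?D * frobenius_sq B))"
    using frobenius_sq_mult_left_le[OF H(1) B] frobenius_sq_mult_right_le[OF B H(1)] H(2)
    by (intro add_mono l1 HB BH) simp_all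
  finally show ?thesis
    by (simp add: algebra_simps)
qed

section \<open>Entrywise derivatives and the time evolution\<close>

text \<open>Matrices of type \<^typ>\<open>complex mat\<close> carry no norm, so differentiability of a matrix-valued
  function of a real variable is taken entrywise; all values must have the shape of the derivative.\<close>

definition has_mat_derivative ::
    "(real \<Rightarrow> complex mat) \<Rightarrow> complex mat \<Rightarrow> real filter \<Rightarrow> bool"
    (infix "has'_mat'_derivative" 50) where
  "(A has_mat_derivative A') F \<longleftrightarrow>
     (\<forall>t. A t \<in> carrier_mat (dim_row A') (dim_col A')) \<and>
     (\<forall>i<dim_row A'. \<forall>j<dim_col A'. ((\<lambda>t. A t $$ (i,j)) has_vector_derivative A' $$ (i,j)) F)"

lemma has_mat_derivativeD:
  assumes "(A has_mat_derivative A') F"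
  shows "A t \<in> carrier_mat (dim_row A') (dim_col A')"
    and "i < dim_row A' \<Longrightarrow> j < dim_col A' \<Longrightarrow> ((\<lambda>t. A t $$ (i,j)) has_vector_derivative A' $$ (i,j)) F"
  using assms by (simp_all add: has_mat_derivative_def)

lemma has_mat_derivative_const: "((\<lambda>t. B) has_mat_derivative 0\<^sub>m (dim_row B) (dim_col B)) F"
  by (simp add: has_mat_derivative_def)

lemma has_mat_derivative_mult:
  assumes A: "(A has_mat_derivative A') (at x within S)"
    and B: "(B has_mat_derivative B') (at x within S)"
    and dim: "dim_col A' = dim_row B'"
  shows "((\<lambda>t. A t * B t) has_mat_derivative (A' * B x + A x * B')) (at x within S)"
proof -
  let ?n = "dim_row A'" and ?k = "dim_col A'" and ?m = "dim_col B'"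
  have cA: "A t \<in> carrier_mat ?n ?k" and cB: "B t \<in> carrier_mat ?k ?m" for t
    using has_mat_derivativeD(1)[OF A] has_mat_derivativeD(1)[OF B] dim by simp_all
  have cA': "A' \<in> carrier_mat ?n ?k" and cB': "B' \<in> carrier_mat ?k ?m"
    using dim by (auto intro: carrier_matI)
  have entry: "((\<lambda>t. (A t * B t) $$ (i,j)) has_vector_derivative (A' * B x + A x * B') $$ (i,j))
      (at x within S)" if ij: "i < ?n" "j < ?m" for i j
  proof -
    have "((\<lambda>t. \<Sum>l<?k. A t $$ (i,l) * B t $$ (l,j)) has_vector_derivative
        (\<Sum>l<?k. A x $$ (i,l) * B' $$ (l,j) + A' $$ (i,l) * B x $$ (l,j))) (at x within S)"
    proof (rule has_vector_derivative_sum)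
      fix l
      assume "l \<in> {..<?k}"
      then show "((\<lambda>t. A t $$ (i,l) * B t $$ (l,j)) has_vector_derivative
          A x $$ (i,l) * B' $$ (l,j) + A' $$ (i,l) * B x $$ (l,j)) (at x within S)"
        using ij dim by (intro has_vector_derivative_mult has_mat_derivativeD(2)[OF A]
            has_mat_derivativeD(2)[OF B]) simp_all
    qed
    moreover have "(\<Sum>l<?k. A x $$ (i,l) * B' $$ (l,j) + A' $$ (i,l) * B x $$ (l,j))
        = (A' * B x + A x * B') $$ (i,j)"
    proof -
      have "(A' * B x + A x * B') $$ (i,j) = (A' * B x) $$ (i,j) + (A x * B') $$ (i,j)"
        using ij carrier_matD[OF cA[of x]] carrier_matD[OF cB'] by (intro index_add_mat(1)) simp_all
      then show ?thesis
        unfolding index_mult_mat_sum[OF cA' cB[of x] ij] index_mult_mat_sum[OF cA[of x] cB' ij]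
        by (simp only: sum.distrib add.commute)
    qed
    moreover have "(A t * B t) $$ (i,j) = (\<Sum>l<?k. A t $$ (i,l) * B t $$ (l,j))" for t
      by (rule index_mult_mat_sum[OF cA cB ij])
    ultimately show ?thesis
      by simp
  qed
  have "dim_row (A' * B x + A x * B') = ?n" "dim_col (A' * B x + A x * B') = ?m"
    using carrier_matD[OF cA[of x]] carrier_matD[OF cB'] by simp_all
  then show ?thesis
    using entry mult_carrier_mat[OF cA cB] by (simp add: has_mat_derivative_def)
qed

lemma has_mat_derivative_adj:
  assumes "(A has_mat_derivative A') (at x within S)"
  shows "((\<lambda>t. adj (A t)) has_mat_derivative adj A') (at x within S)"
proof -
  have entry: "((\<lambda>t. adj (A t) $$ (i,j)) has_vector_derivative adj A' $$ (i,j)) (at x within S)"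
    if ij: "i < dim_col A'" "j < dim_row A'" for i j
  proof -
    have "adj (A t) $$ (i,j) = cnj (A t $$ (j,i))" for t
      using ij carrier_matD[OF has_mat_derivativeD(1)[OF assms, of t]] by simp
    then show ?thesis
      using has_vector_derivative_cnj[OF has_mat_derivativeD(2)[OF assms ij(2,1)]] ij by simp
  qed
  show ?thesis
    unfolding has_mat_derivative_def
    using adj_carrier[OF has_mat_derivativeD(1)[OF assms]] entry by simp
qed

lemma has_mat_derivative_tr_mult:
  assumes "(A has_mat_derivative A') F" "P \<in> carrier_mat (dim_col A') (dim_row A')"
  shows "((\<lambda>t. tr (A t * P)) has_vector_derivative tr (A' * P)) F"
proof -
  let ?n = "dim_row A'" and ?m = "dim_col A'"
  have "((\<lambda>t. \<Sum>i<?n. \<Sum>j<?m. A t $$ (i,j) * P $$ (j,i)) has_vector_derivative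
      (\<Sum>i<?n. \<Sum>j<?m. A' $$ (i,j) * P $$ (j,i))) F"
    by (intro has_vector_derivative_sum has_vector_derivative_mult_left
        has_mat_derivativeD(2)[OF assms(1)]) auto
  moreover have "tr (A t * P) = (\<Sum>i<?n. \<Sum>j<?m. A t $$ (i,j) * P $$ (j,i))" for t
    by (rule tr_mult_eq_sum[OF has_mat_derivativeD(1)[OF assms(1)] assms(2)])
  moreover have "tr (A' * P) = (\<Sum>i<?n. \<Sum>j<?m. A' $$ (i,j) * P $$ (j,i))"
    by (rule tr_mult_eq_sum[OF carrier_mat_triv assms(2)])
  ultimately show ?thesis
    by simp
qed

lemma norm_power_mat_entry_le:
  fixes H :: "complex mat"
  assumes H: "H \<in> carrier_mat N N" and "i < N" "j < N"
  shows "cmod ((H ^\<^sub>m k) $$ (i,j)) \<le> (\<Sum>i<N. \<Sum>j<N. cmod (H $$ (i,j))) ^ k"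
proof -
  define S where "S = (\<Sum>i<N. \<Sum>j<N. cmod (H $$ (i,j)))"
  have col: "(\<Sum>l<N. cmod (H $$ (l,j))) \<le> S" if "j < N" for j
    unfolding S_def using that by (intro sum_mono member_le_sum) auto
  have "cmod ((H ^\<^sub>m k) $$ (i,j)) \<le> S ^ k"
    using assms(3)
  proof (induct k arbitrary: j)
    case 0
    then show ?case
      using H assms(2) by simp
  next
    case (Suc k)
    have "cmod ((H ^\<^sub>m Suc k) $$ (i,j)) = cmod (\<Sum>l<N. (H ^\<^sub>m k) $$ (i,l) * H $$ (l,j))"
      using index_mult_mat_sum[OF pow_carrier_mat[OF H] H assms(2) Suc.prems] by simp
    also have "\<dots> \<le> (\<Sum>l<N. S ^ k * cmod (H $$ (l,j)))"
      using Suc.hyps by (intro order.trans[OF norm_sum] sum_mono) (simp add: norm_mult mult_right_mono)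
    also have "\<dots> \<le> S ^ k * S"
      using col[OF Suc.prems] by (simp add: sum_distrib_left[symmetric] S_def sum_nonneg mult_left_mono)
    finally show ?case
      by (simp add: mult.commute)
  qed
  then show ?thesis
    unfolding S_def .
qed

lemma pow_smult_mat:
  fixes H :: "'a::comm_ring_1 mat"
  shows "H \<in> carrier_mat N N \<Longrightarrow> (c \<cdot>\<^sub>m H) ^\<^sub>m k = c ^ k \<cdot>\<^sub>m (H ^\<^sub>m k)"
proof (induct k)
  case 0
  then show ?case
    by (intro eq_matI) auto
next
  case (Suc k)
  have Hk: "H ^\<^sub>m k \<in> carrier_mat N N"
    using Suc.prems by simp
  have "(c \<cdot>\<^sub>m H) ^\<^sub>m Suc k = (c ^ k \<cdot>\<^sub>m H ^\<^sub>m k) * (c \<cdot>\<^sub>m H)"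
    using Suc by simp
  also have "\<dots> = c ^ k \<cdot>\<^sub>m (c \<cdot>\<^sub>m (H ^\<^sub>m k * H))"
    by (simp add: mult_smult_assoc_mat[OF Hk smult_carrier_mat[OF Suc.prems]]
        mult_smult_distrib[OF Hk Suc.prems])
  also have "\<dots> = c ^ Suc k \<cdot>\<^sub>m (H ^\<^sub>m Suc k)"
    by (intro eq_matI) auto
  finally show ?case .
qed

definition mat_exp_entry :: "complex mat \<Rightarrow> nat \<Rightarrow> nat \<Rightarrow> complex \<Rightarrow> complex" where
  "mat_exp_entry H i j z = (\<Sum>k. (H ^\<^sub>m k) $$ (i,j) / of_nat (fact k) * z ^ k)"

lemma summable_mat_exp_entry:
  fixes H :: "complex mat"
  assumes "H \<in> carrier_mat N N" "i < N" "j < N"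
  shows "summable (\<lambda>k. (H ^\<^sub>m k) $$ (i,j) / of_nat (fact k) * z ^ k)"
proof -
  let ?S = "\<Sum>i<N. \<Sum>j<N. cmod (H $$ (i,j))"
  have "norm ((H ^\<^sub>m k) $$ (i,j) / of_nat (fact k) * z ^ k) \<le> inverse (fact k) * (?S * cmod z) ^ k"
    for k
  proof -
    have "norm ((H ^\<^sub>m k) $$ (i,j) / of_nat (fact k) * z ^ k) = cmod ((H ^\<^sub>m k) $$ (i,j)) * cmod z ^ k / fact k"
      by (simp add: norm_mult norm_divide norm_power)
    also have "\<dots> \<le> ?S ^ k * cmod z ^ k / fact k"
      by (intro divide_right_mono mult_right_mono norm_power_mat_entry_le[OF assms]) auto
    finally show ?thesis
      by (simp add: power_mult_distrib field_simps)
  qed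
  then show ?thesis
    by (intro summable_comparison_test[OF _ summable_exp[of "?S * cmod z"]]) auto
qed

lemma mat_exp_entry_0:
  "H \<in> carrier_mat N N \<Longrightarrow> i < N \<Longrightarrow> j < N \<Longrightarrow> mat_exp_entry H i j 0 = (if i = j then 1 else 0)"
  unfolding mat_exp_entry_def by (subst powser_zero) simp

lemma mat_exp_entry_has_field_derivative:
  assumes H: "H \<in> carrier_mat N N" and "i < N" "j < N"
  shows "(mat_exp_entry H i j has_field_derivative H $$ (i,j)) (at 0)"
proof -
  have "(mat_exp_entry H i j has_field_derivative
      (\<Sum>k. diffs (\<lambda>k. (H ^\<^sub>m k) $$ (i,j) / of_nat (fact k)) k * 0 ^ k)) (at 0)"
    unfolding mat_exp_entry_def
    by (rule termdiffs_strong_converges_everywhere) (rule summable_mat_exp_entry[OF assms])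
  moreover have "(\<Sum>k. diffs (\<lambda>k. (H ^\<^sub>m k) $$ (i,j) / of_nat (fact k)) k * 0 ^ k) = H $$ (i,j)"
    using H by (subst powser_zero) (simp add: diffs_def)
  ultimately show ?thesis
    by simp
qed

lemma evol_carrier: "H \<in> carrier_mat N N \<Longrightarrow> evol H t \<in> carrier_mat N N"
  unfolding evol_def mat_exp_def by (intro carrier_matI) (simp_all add: carrier_matD)

lemma index_evol:
  assumes "H \<in> carrier_mat N N" "i < N" "j < N"
  shows "evol H t $$ (i,j) = mat_exp_entry H i j (- \<i> * complex_of_real t)"
  using assms by (simp add: evol_def mat_exp_def mat_exp_entry_def pow_smult_mat carrier_matD mult.commute)

lemma evol_0: "H \<in> carrier_mat N N \<Longrightarrow> evol H 0 = 1\<^sub>m N"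
  by (intro eq_matI) (simp_all add: index_evol mat_exp_entry_0 carrier_matD[OF evol_carrier])

lemma evol_has_mat_derivative:
  assumes H: "H \<in> carrier_mat N N"
  shows "(evol H has_mat_derivative (- \<i> \<cdot>\<^sub>m H)) (at 0)"
proof -
  have entry: "((\<lambda>t. evol H t $$ (i,j)) has_vector_derivative (- \<i> \<cdot>\<^sub>m H) $$ (i,j)) (at 0)"
    if ij: "i < N" "j < N" for i j
  proof -
    have "(mat_exp_entry H i j has_field_derivative H $$ (i,j)) (at (- \<i> * 0))"
      using mat_exp_entry_has_field_derivative[OF H ij] by simp
    from DERIV_chain2[OF this DERIV_cmult_Id]
    have "((\<lambda>z. mat_exp_entry H i j (- \<i> * z)) has_field_derivative H $$ (i,j) * - \<i>) (at (of_real 0))"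
      by simp
    from has_vector_derivative_real_field[OF this]
    show ?thesis
      using H ij by (simp add: index_evol mult.commute)
  qed
  show ?thesis
    unfolding has_mat_derivative_def using H evol_carrier[OF H] entry by simp
qed

lemma evol_conj_has_mat_derivative:
  assumes H: "H \<in> carrier_mat N N" "adj H = H" and B: "B \<in> carrier_mat N N"
  shows "((\<lambda>t. evol H t * B * adj (evol H t)) has_mat_derivative (- \<i> \<cdot>\<^sub>m (H * B - B * H))) (at 0)"
proof -
  have U: "(evol H has_mat_derivative (- \<i> \<cdot>\<^sub>m H)) (at 0)"
    by (rule evol_has_mat_derivative[OF H(1)])
  have "((\<lambda>t. evol H t * B) has_mat_derivative (- \<i> \<cdot>\<^sub>m H) * B + evol H 0 * 0\<^sub>m N N) (at 0)"
    using has_mat_derivative_mult[OF U has_mat_derivative_const[of B]] H B by simp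
  from has_mat_derivative_mult[OF this has_mat_derivative_adj[OF U]]
  have "((\<lambda>t. evol H t * B * adj (evol H t)) has_mat_derivative
      ((- \<i> \<cdot>\<^sub>m H) * B + evol H 0 * 0\<^sub>m N N) * adj (evol H 0) + evol H 0 * B * adj (- \<i> \<cdot>\<^sub>m H)) (at 0)"
    using H B by simp
  moreover have "((- \<i> \<cdot>\<^sub>m H) * B + evol H 0 * 0\<^sub>m N N) * adj (evol H 0) + evol H 0 * B * adj (- \<i> \<cdot>\<^sub>m H)
      = - \<i> \<cdot>\<^sub>m (H * B) + \<i> \<cdot>\<^sub>m (B * H)"
    using H B by (simp add: evol_0 adj_smult mult_smult_assoc_mat[OF H(1) B] mult_smult_distrib[OF B H(1)])
  moreover have "- \<i> \<cdot>\<^sub>m (H * B) + \<i> \<cdot>\<^sub>m (B * H) = - \<i> \<cdot>\<^sub>m (H * B - B * H)"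
    using H B by (intro eq_matI) (auto simp: algebra_simps)
  ultimately show ?thesis
    by simp
qed

section \<open>Differentiating p log p\<close>

lemma x_abs_ln_le_inverse_exp:
  assumes "0 < x" "x \<le> (1::real)"
  shows "x * \<bar>ln x\<bar> \<le> 1 / exp 1"
proof -
  have "ln (1 / x / exp 1) \<le> 1 / x / exp 1 - 1"
    using assms by (intro ln_le_minus_one) simp
  moreover have "ln (1 / x / exp 1) = - ln x - 1"
    using assms by (simp add: ln_div ln_mult)
  ultimately have "x * (- ln x) \<le> x * (1 / (x * exp 1))"
    using assms by (intro mult_left_mono) auto
  then show ?thesis
    using assms by (simp add: abs_of_nonpos)
qed

lemma abs_x_ln_le_powr:
  assumes "0 \<le> x" "x \<le> (1::real)"
  shows "\<bar>x * ln x\<bar> \<le> 4 * x powr (3/4)"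
proof (cases "x = 0")
  case False
  then have x: "x > 0"
    using assms by simp
  have "ln (x powr (-1/4)) \<le> x powr (-1/4) - 1"
    using x by (intro ln_le_minus_one) simp
  then have "- ln x \<le> 4 * x powr (-1/4)"
    using x by (simp add: ln_powr)
  then have "x * (- ln x) \<le> x * (4 * x powr (-1/4))"
    using x by (intro mult_left_mono) auto
  moreover have "x * ln x \<le> 0"
    using x assms by (simp add: mult_nonneg_nonpos)
  ultimately have "\<bar>x * ln x\<bar> \<le> x * (4 * x powr (-1/4))"
    by simp
  also have "\<dots> = 4 * x powr (3/4)"
    using x by (simp add: powr_add[symmetric] powr_mult_base)
  finally show ?thesis .
qed simp

lemma square_powr_three_quarters:
  assumes "0 \<le> y"
  shows "(y\<^sup>2) powr (3/4) = y * sqrt (y::real)"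
proof -
  have "(y\<^sup>2) powr (3/4) = (y powr 2) powr (3/4)"
    using assms by simp
  also have "\<dots> = y powr (1 + 1/2)"
    by (simp add: powr_powr)
  also have "\<dots> = y powr 1 * y powr (1/2)"
    by (rule powr_add)
  also have "\<dots> = y * sqrt y"
    using assms by (simp add: powr_half_sqrt)
  finally show ?thesis .
qed

lemma eventually_norm_diff_le:
  fixes f :: "real \<Rightarrow> 'a::real_normed_vector"
  assumes "(f has_vector_derivative f') (at x)"
  shows "\<forall>\<^sub>F t in at x. norm (f t - f x) \<le> (norm f' + 1) * \<bar>t - x\<bar>"
proof -
  have "((\<lambda>t. norm (f t - f x - (t - x) *\<^sub>R f') / norm (t - x)) \<longlongrightarrow> 0) (at x)"
    using assms unfolding has_vector_derivative_def has_derivative_iff_norm by simp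
  then have "\<forall>\<^sub>F t in at x. norm (f t - f x - (t - x) *\<^sub>R f') / norm (t - x) < 1"
    by (rule order_tendstoD) simp
  moreover have "\<forall>\<^sub>F t in at x. t \<noteq> x"
    by (simp add: eventually_at_filter)
  ultimately show ?thesis
  proof eventually_elim
    case (elim t)
    then have "norm (f t - f x - (t - x) *\<^sub>R f') \<le> \<bar>t - x\<bar>"
      by (simp add: divide_less_eq)
    moreover have "norm (f t - f x) \<le> norm ((t - x) *\<^sub>R f') + norm (f t - f x - (t - x) *\<^sub>R f')"
      by (rule norm_triangle_sub)
    moreover have "norm ((t - x) *\<^sub>R f') = \<bar>t - x\<bar> * norm f'"
      by simp
    moreover have "(norm f' + 1) * \<bar>t - x\<bar> = \<bar>t - x\<bar> * norm f' + \<bar>t - x\<bar>"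
      by (simp add: algebra_simps)
    ultimately show ?case
      by linarith
  qed
qed

lemma has_real_derivative_cmod_sq:
  assumes f: "(f has_vector_derivative f') (at x)"
  shows "((\<lambda>t. (cmod (f t))\<^sup>2) has_real_derivative 2 * Re (cnj (f x) * f')) (at x)"
proof -
  have "((\<lambda>t. Re (f t) * Re (f t) + Im (f t) * Im (f t)) has_real_derivative
      Re f' * Re (f x) + Re f' * Re (f x) + (Im f' * Im (f x) + Im f' * Im (f x))) (at x)"
    using has_field_derivative_Re[OF f] has_field_derivative_Im[OF f] by (intro DERIV_add DERIV_mult)
  then show ?thesis
    unfolding cmod_power2 unfolding power2_eq_square by (rule DERIV_cong) (simp add: algebra_simps)
qed

lemma has_real_derivative_xlogx_cmod_sq_zero:
  fixes f :: "real \<Rightarrow> complex"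
  assumes f: "(f has_vector_derivative f') (at x)" and zero: "f x = 0"
  shows "((\<lambda>t. (cmod (f t))\<^sup>2 * log 2 ((cmod (f t))\<^sup>2)) has_real_derivative 0) (at x)"
proof -
  define K where "K = cmod f' + 1"
  define p where "p t = (cmod (f t))\<^sup>2" for t
  have K: "K > 0"
    by (simp add: K_def add_nonneg_pos)
  have "((\<lambda>t. cmod (f t)) \<longlongrightarrow> cmod (f x)) (at x)"
    using has_vector_derivative_continuous[OF f] by (simp add: continuous_at tendsto_norm)
  then have "(p \<longlongrightarrow> 0) (at x)"
    unfolding p_def using zero tendsto_power[of "\<lambda>t. cmod (f t)" 0 "at x" 2] by simp
  then have small: "\<forall>\<^sub>F t in at x. p t < 1"
    by (rule order_tendstoD) simp
  have lin: "\<forall>\<^sub>F t in at x. cmod (f t) \<le> K * \<bar>t - x\<bar>"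
    using eventually_norm_diff_le[OF f] zero by (simp add: K_def)
  have ne: "\<forall>\<^sub>F t in at x. t \<noteq> x"
    by (simp add: eventually_at_filter)
  \<comment> \<open>p t <= (K |t - x|)^2 and |p ln p| <= 4 p^(3/4), so the difference quotient is O(sqrt |t - x|)\<close>
  have "\<forall>\<^sub>F t in at x. norm ((p t * log 2 (p t) - p x * log 2 (p x)) / (t - x))
      \<le> 4 * K / ln 2 * sqrt (K * \<bar>t - x\<bar>)"
    using small lin ne
  proof eventually_elim
    case (elim t)
    let ?y = "K * \<bar>t - x\<bar>"
    have y: "0 \<le> ?y"
      using K by simp
    have p: "0 \<le> p t" "p t \<le> ?y\<^sup>2"
      using elim by (auto simp: p_def intro: power_mono)
    have "norm ((p t * log 2 (p t) - p x * log 2 (p x)) / (t - x)) = \<bar>p t * ln (p t)\<bar> / ln 2 / \<bar>t - x\<bar>"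
      using zero by (simp add: p_def log_def abs_divide abs_mult)
    also have "\<dots> \<le> 4 * p t powr (3/4) / ln 2 / \<bar>t - x\<bar>"
      using abs_x_ln_le_powr[of "p t"] elim p by (intro divide_right_mono) auto
    also have "\<dots> \<le> 4 * (?y\<^sup>2) powr (3/4) / ln 2 / \<bar>t - x\<bar>"
      using p by (intro divide_right_mono mult_left_mono powr_mono2) auto
    also have "\<dots> = 4 * K / ln 2 * sqrt ?y"
      using K elim unfolding square_powr_three_quarters[OF y] by (simp add: field_simps)
    finally show ?case .
  qed
  moreover have "((\<lambda>t. 4 * K / ln 2 * sqrt (K * \<bar>t - x\<bar>)) \<longlongrightarrow> 0) (at x)"
    by (rule tendsto_eq_intros refl)+ simp
  ultimately have "((\<lambda>t. (p t * log 2 (p t) - p x * log 2 (p x)) / (t - x)) \<longlongrightarrow> 0) (at x)"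
    by (rule Lim_null_comparison)
  then show ?thesis
    unfolding has_field_derivative_iff p_def .
qed

lemma has_real_derivative_xlogx_cmod_sq:
  fixes f :: "real \<Rightarrow> complex"
  assumes f: "(f has_vector_derivative f') (at x)"
  shows "((\<lambda>t. (cmod (f t))\<^sup>2 * log 2 ((cmod (f t))\<^sup>2)) has_real_derivative
           2 * Re (cnj (f x) * f') * (log 2 ((cmod (f x))\<^sup>2) + 1 / ln 2)) (at x)"
proof (cases "f x = 0")
  case True
  then show ?thesis
    using has_real_derivative_xlogx_cmod_sq_zero[OF f] by simp
next
  case False
  let ?p = "(cmod (f x))\<^sup>2" and ?q = "2 * Re (cnj (f x) * f')"
  have p: "?p > 0"
    using False by simp
  have dp: "((\<lambda>t. (cmod (f t))\<^sup>2) has_real_derivative ?q) (at x)"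
    by (rule has_real_derivative_cmod_sq[OF f])
  have "((\<lambda>t. (cmod (f t))\<^sup>2 * log 2 ((cmod (f t))\<^sup>2)) has_real_derivative
      ?q * log 2 ?p + 1 / (ln 2 * ?p) * ?q * ?p) (at x)"
    by (rule DERIV_mult[OF dp DERIV_chain2[OF DERIV_log[OF p] dp]])
  moreover have "?q * log 2 ?p + 1 / (ln 2 * ?p) * ?q * ?p = ?q * (log 2 ?p + 1 / ln 2)"
    using p by (simp add: field_simps)
  ultimately show ?thesis
    by simp
qed

lemma abs_Re_cnj_mult_log_le:
  assumes "cmod z \<le> 1"
  shows "\<bar>2 * Re (cnj z * w) * log 2 ((cmod z)\<^sup>2)\<bar> \<le> 4 * cmod w / (exp 1 * ln 2)"
proof (cases "z = 0")
  case False
  define r where "r = cmod z"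
  define R where "R = Re (cnj z * w)"
  have r: "0 < r" "r \<le> 1"
    using False assms by (simp_all add: r_def)
  have R: "\<bar>R\<bar> \<le> r * cmod w"
    using abs_Re_le_cmod[of "cnj z * w"] by (simp add: R_def r_def norm_mult)
  have "\<bar>2 * R * log 2 (r\<^sup>2)\<bar> = 4 * \<bar>R\<bar> * \<bar>ln r\<bar> / ln 2"
    using r by (simp add: log_def ln_realpow abs_mult)
  also have "\<dots> \<le> 4 * (r * cmod w) * \<bar>ln r\<bar> / ln 2"
    using R by (intro divide_right_mono mult_right_mono mult_left_mono) auto
  also have "\<dots> = 4 * cmod w * (r * \<bar>ln r\<bar>) / ln 2"
    by (simp add: mult_ac)
  also have "\<dots> \<le> 4 * cmod w * (1 / exp 1) / ln 2"
    using x_abs_ln_le_inverse_exp[OF r] by (intro divide_right_mono mult_left_mono) auto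
  finally show ?thesis
    by (simp add: R_def r_def)
qed simp

section \<open>The magic rate\<close>

definition pauli_coeff :: "nat \<Rightarrow> nat \<Rightarrow> complex mat \<Rightarrow> (nat \<Rightarrow> nat \<times> nat) \<Rightarrow> complex" where
  "pauli_coeff d n A a = tr (A * pauli_string d n a) / of_nat (d ^ n)"

definition pauli_entropy_deriv :: "nat \<Rightarrow> nat \<Rightarrow> complex mat \<Rightarrow> complex mat \<Rightarrow> real" where
  "pauli_entropy_deriv d n A A' =
     - (\<Sum>a\<in>pauli_indices d n. 2 * Re (cnj (pauli_coeff d n A a) * pauli_coeff d n A' a)
                               * (log 2 ((cmod (pauli_coeff d n A a))\<^sup>2) + 1 / ln 2))"

lemma pauli_prob_eq_cmod_sq: "pauli_prob d n A a = (cmod (pauli_coeff d n A a))\<^sup>2"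
proof -
  have "(real d ^ n)\<^sup>2 = real d ^ (2 * n)"
    by (simp add: power_even_eq)
  then show ?thesis
    by (simp add: pauli_prob_def pauli_coeff_def norm_divide norm_power power_divide)
qed

lemma pauli_entropy_has_derivative:
  assumes A: "(A has_mat_derivative A') (at x)" and A': "A' \<in> carrier_mat (d ^ n) (d ^ n)"
  shows "((\<lambda>t. pauli_entropy d n (A t)) has_real_derivative pauli_entropy_deriv d n (A x) A') (at x)"
proof -
  have coeff: "((\<lambda>t. pauli_coeff d n (A t) a) has_vector_derivative pauli_coeff d n A' a) (at x)" for a
    unfolding pauli_coeff_def using has_mat_derivative_tr_mult[OF A, of "pauli_string d n a"] A'
    by (intro has_vector_derivative_divide) simp
  have "((\<lambda>t. - (\<Sum>a\<in>pauli_indices d n. (cmod (pauli_coeff d n (A t) a))\<^sup>2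
                                         * log 2 ((cmod (pauli_coeff d n (A t) a))\<^sup>2)))
      has_real_derivative pauli_entropy_deriv d n (A x) A') (at x)"
    unfolding pauli_entropy_deriv_def
    by (intro DERIV_minus DERIV_sum has_real_derivative_xlogx_cmod_sq[OF coeff])
  then show ?thesis
    by (simp add: pauli_entropy_def pauli_prob_eq_cmod_sq)
qed

lemma frobenius_sq_of_norm2_eq_1:
  assumes "d > 0" "A \<in> carrier_mat (d ^ n) (d ^ n)" "norm2 d n A = 1"
  shows "frobenius_sq A = real d ^ n"
proof -
  have "norm2 d n A = sqrt (frobenius_sq A / real d ^ n)"
    by (simp add: norm2_def tr_adj_mult_self[OF assms(2)])
  then have "sqrt (frobenius_sq A / real d ^ n) = 1"
    unfolding assms(3) by (rule sym)
  then have "frobenius_sq A / real d ^ n = 1"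
    unfolding real_sqrt_eq_1_iff .
  then show ?thesis
    unfolding divide_eq_1_iff by blast
qed

lemma norm_pauli_coeff_le_1:
  assumes "d > 0" "A \<in> carrier_mat (d ^ n) (d ^ n)" "frobenius_sq A = real d ^ n" "a \<in> pauli_indices d n"
  shows "cmod (pauli_coeff d n A a) \<le> 1"
proof -
  let ?D = "real d ^ n" and ?c = "\<lambda>a. cmod (tr (A * pauli_string d n a))"
  have D: "?D > 0"
    using assms(1) by simp
  have "(?c a)\<^sup>2 \<le> (\<Sum>a\<in>pauli_indices d n. (?c a)\<^sup>2)"
    by (rule member_le_sum[OF assms(4)]) simp_all
  also have "\<dots> = ?D\<^sup>2"
    unfolding pauli_parseval_norm[OF assms(1,2)] assms(3) by (rule power2_eq_square[symmetric])
  finally have "?c a \<le> ?D"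
    by (rule power2_le_imp_le) (use D in simp)
  moreover have "cmod (pauli_coeff d n A a) = ?c a / ?D"
    by (simp add: pauli_coeff_def norm_divide norm_power)
  ultimately show ?thesis
    using D by simp
qed

lemma sum_Re_pauli_coeff_commutator:
  assumes "d > 0" and H: "H \<in> carrier_mat (d ^ n) (d ^ n)" "adj H = H"
    and B: "B \<in> carrier_mat (d ^ n) (d ^ n)"
  shows "(\<Sum>a\<in>pauli_indices d n.
            Re (cnj (pauli_coeff d n B a) * pauli_coeff d n (- \<i> \<cdot>\<^sub>m (H * B - B * H)) a)) = 0"
proof -
  let ?I = "pauli_indices d n" and ?P = "pauli_string d n" and ?C = "- \<i> \<cdot>\<^sub>m (H * B - B * H)"
  have C: "?C \<in> carrier_mat (d ^ n) (d ^ n)"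
    by (rule smult_carrier_mat[OF minus_carrier_mat[OF mult_carrier_mat[OF B H(1)]]])
  have "(\<Sum>a\<in>?I. cnj (pauli_coeff d n B a) * pauli_coeff d n ?C a)
      = (\<Sum>a\<in>?I. cnj (tr (B * ?P a)) * tr (?C * ?P a)) / (of_nat (d ^ n))\<^sup>2"
    by (simp add: pauli_coeff_def sum_divide_distrib power2_eq_square)
  also have "\<dots> = tr (adj B * ?C) / of_nat (d ^ n)"
    using assms(1) by (simp add: pauli_parseval[OF assms(1) B C] power2_eq_square)
  finally have "Re (\<Sum>a\<in>?I. cnj (pauli_coeff d n B a) * pauli_coeff d n ?C a)
      = Re (tr (adj B * ?C)) / real d ^ n"
    by simp
  then show ?thesis
    using Re_tr_adj_mult_commutator[OF H B] by simp
qed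

lemma abs_pauli_entropy_deriv_commutator_le:
  assumes d: "d > 0" and H: "H \<in> carrier_mat (d ^ n) (d ^ n)" "adj H = H"
    and B: "B \<in> carrier_mat (d ^ n) (d ^ n)" "frobenius_sq B = real d ^ n"
  shows "\<bar>pauli_entropy_deriv d n B (- \<i> \<cdot>\<^sub>m (H * B - B * H))\<bar>
           \<le> 8 * real d ^ n * opnorm H * log 2 (exp 1) / exp 1"
proof -
  let ?I = "pauli_indices d n" and ?D = "real d ^ n" and ?C = "- \<i> \<cdot>\<^sub>m (H * B - B * H)"
  let ?z = "pauli_coeff d n B" and ?w = "pauli_coeff d n ?C"
  define q where "q a = 2 * Re (cnj (?z a) * ?w a)" for a
  define L where "L a = log 2 ((cmod (?z a))\<^sup>2)" for a
  have D: "?D > 0"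
    using d by simp
  have "(\<Sum>a\<in>?I. q a) = 2 * (\<Sum>a\<in>?I. Re (cnj (?z a) * ?w a))"
    unfolding q_def by (rule sum_distrib_left[symmetric])
  also have "\<dots> = 0"
    unfolding sum_Re_pauli_coeff_commutator[OF d H B(1)] by simp
  finally have q0: "(\<Sum>a\<in>?I. q a) = 0" .
  have "pauli_entropy_deriv d n B ?C = - (\<Sum>a\<in>?I. q a * (L a + 1 / ln 2))"
    by (simp only: pauli_entropy_deriv_def q_def L_def)
  also have "\<dots> = - ((\<Sum>a\<in>?I. q a * L a) + (\<Sum>a\<in>?I. q a) / ln 2)"
    by (simp add: distrib_left sum.distrib sum_divide_distrib)
  finally have "\<bar>pauli_entropy_deriv d n B ?C\<bar> = \<bar>\<Sum>a\<in>?I. q a * L a\<bar>"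
    by (simp add: q0)
  also have "\<dots> \<le> (\<Sum>a\<in>?I. \<bar>q a * L a\<bar>)"
    by (rule sum_abs)
  also have "\<dots> \<le> (\<Sum>a\<in>?I. 4 * cmod (?w a) / (exp 1 * ln 2))"
    unfolding q_def L_def using norm_pauli_coeff_le_1[OF d B] by (intro sum_mono abs_Re_cnj_mult_log_le)
  also have "\<dots> = 4 / (exp 1 * ln 2 * ?D) * (\<Sum>a\<in>?I. cmod (tr (?C * pauli_string d n a)))"
    by (simp add: pauli_coeff_def norm_divide norm_power sum_distrib_left sum_divide_distrib mult_ac)
  also have "\<dots> \<le> 4 / (exp 1 * ln 2 * ?D) * (2 * ?D * opnorm H * sqrt (?D * ?D))"
    using pauli_l1_commutator_le[OF d H B(1)] B(2) D by (intro mult_left_mono) auto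
  also have "\<dots> = 8 * ?D * opnorm H * log 2 (exp 1) / exp 1"
    using D by (simp add: log_def field_simps)
  finally show ?thesis .
qed

theorem mainTheorem17:
  fixes d n :: nat and H Ob :: "complex mat"
  assumes "d \<ge> 2" and "n \<ge> 1"
    and "hermitian_mat (d ^ n) H"
    and "Ob \<in> carrier_mat (d ^ n) (d ^ n)"
    and "norm2 d n Ob = 1"
  shows "\<exists>R. ((\<lambda>t. pauli_entropy d n (evol H t * Ob * adj (evol H t)))
                 has_real_derivative R) (at 0)
           \<and> \<bar>R\<bar> \<le> 8 * real d ^ n * opnorm H * log 2 (exp 1) / exp 1"
proof -
  \<comment> \<open>of the hypotheses d \<ge> 2 and n \<ge> 1 only d > 0 is needed\<close>
  let ?C = "- \<i> \<cdot>\<^sub>m (H * Ob - Ob * H)"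
  have d: "d > 0"
    using assms(1) by simp
  have H: "H \<in> carrier_mat (d ^ n) (d ^ n)" "adj H = H"
    using assms(3) by (simp_all add: hermitian_mat_def)
  have "evol H 0 * Ob * adj (evol H 0) = Ob"
    using assms(4) by (simp add: evol_0[OF H(1)])
  then have "((\<lambda>t. pauli_entropy d n (evol H t * Ob * adj (evol H t)))
      has_real_derivative pauli_entropy_deriv d n Ob ?C) (at 0)"
    using pauli_entropy_has_derivative[OF evol_conj_has_mat_derivative[OF H assms(4)], of d n]
      smult_carrier_mat[OF minus_carrier_mat[OF mult_carrier_mat[OF assms(4) H(1)]]] by simp
  moreover have "\<bar>pauli_entropy_deriv d n Ob ?C\<bar> \<le> 8 * real d ^ n * opnorm H * log 2 (exp 1) / exp 1"
    using abs_pauli_entropy_deriv_commutator_le[OF d H assms(4) frobenius_sq_of_norm2_eq_1[OF d assms(4,5)]] .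
  ultimately show ?thesis
    by blast
qed

end
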